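(* Assume $\operatorname{add}(\mathcal N)=\operatorname{cov}(\mathcal N)$. Then $\mathcal{AN}_{\operatorname{add}(\mathcal N)}$ is strongly $2^{\mathfrak c}$-algebrable in $\left(\mathbb R^{\mathbb R}\right)^{\operatorname{add}(\mathcal N)}$.
   Context: For a regular infinite cardinal $\kappa$, a $\kappa$-sequence $(x_\alpha)_{\alpha<\kappa}$ converges to $x$ if for every neighbourhood $U$ of $x$ there is $\alpha_0<\kappa$ with $x_\alpha\in U$ for all $\alpha_0<\alpha<\kappa$; $\left(\mathbb R^{\mathbb R}\right)^{\kappa}$ is the commutative real algebra of $\kappa$-sequences of functions $\mathbb R\to\mathbb R$ with indexwise operations. $\operatorname{add}(\mathcal N)$ is the least cardinality of a family of Lebesgue null sets with non-null union; $\operatorname{cov}(\mathcal N)$ the least cardinality of a family of null sets covering $[0,1]$. $\mathcal{AN}_{\kappa}$: $\kappa$-sequences of Lebesgue measurable functions $f_\alpha:\mathbb R\to\mathbb R$ converging pointwise a.e. to a function that is not Lebesgue measurable. $S$ is strongly $\mu$-algebrable if there is a set $X$ of $\mu$ algebraically independent elements such that every nonzero element of the (non-unital) algebra generated by $X$ belongs to $S$. *)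

theory Defs
  imports "HOL-Analysis.Analysis" "HOL-Library.Poly_Mapping"
begin

(* Cardinals are represented by cardinal orders (initial ordinals), as in HOL's
   BNF cardinal library: r is a cardinal order on the whole type 'k. *)

definition is_addN :: "'k rel \<Rightarrow> bool" where
  "is_addN r \<longleftrightarrow> card_order r
     \<and> (\<exists>F::real set set. F \<subseteq> null_sets lebesgue \<and> \<Union>F \<notin> null_sets lebesgue
            \<and> (card_of F, r) \<in> ordIso)
     \<and> (\<forall>F::real set set. F \<subseteq> null_sets lebesgue \<and> \<Union>F \<notin> null_sets lebesgue
            \<longrightarrow> (r, card_of F) \<in> ordLeq)"

definition is_covN :: "'k rel \<Rightarrow> bool" where
  "is_covN r \<longleftrightarrow> card_order r
     \<and> (\<exists>F::real set set. F \<subseteq> null_sets lebesgue \<and> {0..1} \<subseteq> \<Union>F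
            \<and> (card_of F, r) \<in> ordIso)
     \<and> (\<forall>F::real set set. F \<subseteq> null_sets lebesgue \<and> {0..1} \<subseteq> \<Union>F
            \<longrightarrow> (r, card_of F) \<in> ordLeq)"

definition kseq_converges :: "'k rel \<Rightarrow> ('k \<Rightarrow> 'a::topological_space) \<Rightarrow> 'a \<Rightarrow> bool" where
  "kseq_converges r x l \<longleftrightarrow>
     (\<forall>U. open U \<and> l \<in> U \<longrightarrow>
        (\<exists>\<alpha>0. \<forall>\<alpha>. (\<alpha>0, \<alpha>) \<in> r \<and> \<alpha> \<noteq> \<alpha>0 \<longrightarrow> x \<alpha> \<in> U))"

definition AN :: "'k rel \<Rightarrow> ('k \<Rightarrow> real \<Rightarrow> real) set" where
  "AN r = {f. (\<forall>\<alpha>. f \<alpha> \<in> borel_measurable lebesgue)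
     \<and> (\<exists>g. g \<notin> borel_measurable lebesgue
            \<and> (AE t in lebesgue. kseq_converges r (\<lambda>\<alpha>. f \<alpha> t) (g t)))}"

inductive_set gen_alg :: "('k \<Rightarrow> real \<Rightarrow> real) set \<Rightarrow> ('k \<Rightarrow> real \<Rightarrow> real) set"
  for X where
    gen: "x \<in> X \<Longrightarrow> x \<in> gen_alg X"
  | add: "f \<in> gen_alg X \<Longrightarrow> g \<in> gen_alg X \<Longrightarrow> (\<lambda>\<alpha> t. f \<alpha> t + g \<alpha> t) \<in> gen_alg X"
  | mult: "f \<in> gen_alg X \<Longrightarrow> g \<in> gen_alg X \<Longrightarrow> (\<lambda>\<alpha> t. f \<alpha> t * g \<alpha> t) \<in> gen_alg X"
  | scale: "f \<in> gen_alg X \<Longrightarrow> (\<lambda>\<alpha> t. c * f \<alpha> t) \<in> gen_alg X"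

text \<open>Multivariate real polynomials whose variables are elements of the algebra, as finitely
  supported maps from monomials (finitely supported exponent maps) to coefficients,
  and their evaluation in the algebra (R^R)^kappa.\<close>
type_synonym 'v mpoly_rep = "('v \<Rightarrow>\<^sub>0 nat) \<Rightarrow>\<^sub>0 real"

definition poly_vars :: "'v mpoly_rep \<Rightarrow> 'v set" where
  "poly_vars P = \<Union> (Poly_Mapping.keys ` (Poly_Mapping.keys P))"

definition poly_eval :: "('k \<Rightarrow> real \<Rightarrow> real) mpoly_rep \<Rightarrow> ('k \<Rightarrow> real \<Rightarrow> real)" where
  "poly_eval P = (\<lambda>\<alpha> t. \<Sum>m\<in>Poly_Mapping.keys P. Poly_Mapping.lookup P m * (\<Prod>v\<in>Poly_Mapping.keys m. v \<alpha> t ^ Poly_Mapping.lookup m v))"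

definition alg_independent :: "('k \<Rightarrow> real \<Rightarrow> real) set \<Rightarrow> bool" where
  "alg_independent X \<longleftrightarrow>
     (\<forall>P. P \<noteq> 0 \<and> poly_vars P \<subseteq> X \<and> Poly_Mapping.lookup P 0 = 0 \<longrightarrow> poly_eval P \<noteq> (\<lambda>\<alpha> t. 0))"

definition strongly_algebrable :: "('k \<Rightarrow> real \<Rightarrow> real) set \<Rightarrow> 'c rel \<Rightarrow> bool" where
  "strongly_algebrable S mu \<longleftrightarrow>
     (\<exists>X. (card_of X, mu) \<in> ordIso \<and> alg_independent X
          \<and> (\<forall>f\<in>gen_alg X. f \<noteq> (\<lambda>\<alpha> t. 0) \<longrightarrow> f \<in> S))"

end

theory Submission
  imports Defs "HOL-Library.Equipollence" "HOL-Computational_Algebra.Primes"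
begin

text \<open>Enumerate a cover of \<open>[0,1]\<close> by \<open>\<kappa> = cov(N) = add(N)\<close> null sets \<open>M\<^sub>\<alpha>\<close>. The stages
  \<open>N\<^sub>\<alpha> = \<Union>{M\<^sub>\<beta> | \<beta> \<le> \<alpha>}\<close> are null, being unions of fewer than \<open>add(N)\<close> null sets, and
  every point of \<open>[0,1]\<close> lies in \<open>N\<^sub>\<alpha>\<close> for all large \<open>\<alpha>\<close>. By transfinite recursion choose
  distinct points \<open>p(K,z)\<close>, one in each closed \<open>K \<subseteq> [0,1]\<close> of positive measure for each code
  \<open>z\<close>, the codes ranging over a set of size \<open>|\<real>|\<close>. For \<open>Q\<close> on codes vanishing at the empty code let
  \<open>f\<^sub>\<alpha>\<close> be \<open>Q(z)\<close> at the points \<open>p(K,z)\<close> of \<open>N\<^sub>\<alpha>\<close> and \<open>0\<close> elsewhere: every \<open>f\<^sub>\<alpha>\<close>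
  vanishes a.e., yet the pointwise limit is non-measurable as soon as \<open>Q \<noteq> 0\<close>, because its
  support and the complement of its support both meet every closed set of positive measure.
  A code assigns a value to every \<open>S \<subseteq> \<real>\<close> through the membership pattern of \<open>S\<close> on finitely
  many points, giving \<open>2^|\<real>|\<close> generators. Codes realise arbitrary values on finitely many
  distinct sets, so a polynomial relation among the generators would be a nonzero real
  polynomial vanishing everywhere.\<close>

unbundle cardinal_syntax

lemma card_of_Times_le_real:
  assumes "|A| \<le>o |UNIV :: real set|" and "|B| \<le>o |UNIV :: real set|"
  shows "|A \<times> B| \<le>o |UNIV :: real set|"
  using assms by (intro card_of_Times_ordLeq_infinite_Field)
    (simp_all add: Field_card_of card_of_card_order_on infinite_UNIV_char_0)

lemma card_of_real_lists_le: "|UNIV :: real list set| \<le>o |UNIV :: real set|"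
proof -
  have inf: "\<not> finite (UNIV :: real set)" by (simp add: infinite_UNIV_char_0)
  define L where "L n = {xs :: real list. length xs = n}" for n
  have L_le: "|L n| \<le>o |UNIV :: real set|" for n
  proof (induction n)
    case 0
    have "L 0 = {[]}" by (auto simp: L_def)
    then show ?case using card_of_singl_ordLeq[of "UNIV :: real set" "[]"] by simp
  next
    case (Suc n)
    have "L (Suc n) = (\<lambda>(x, xs). x # xs) ` (UNIV \<times> L n)"
      by (auto simp: L_def image_iff length_Suc_conv)
    moreover have "|(\<lambda>(x, xs). x # xs) ` ((UNIV :: real set) \<times> L n)| \<le>o |(UNIV :: real set) \<times> L n|"
      by (rule card_of_image)
    moreover have "|(UNIV :: real set) \<times> L n| \<le>o |UNIV :: real set|"
      by (rule card_of_Times_le_real[OF card_of_mono1[OF subset_UNIV] Suc])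
    ultimately show ?case
      by (metis ordLeq_transitive)
  qed
  have "(UNIV :: real list set) = (\<Union>n. L n)" by (auto simp: L_def)
  moreover have "|\<Union>n. L n| \<le>o |UNIV :: real set|"
    using inf infinite_iff_card_of_nat L_le by (intro card_of_UNION_ordLeq_infinite[OF inf]) auto
  ultimately show ?thesis by simp
qed

lemma closed_real_avoids_rational_interval:
  fixes K :: "real set"
  assumes "closed K" and "x \<notin> K"
  obtains a b :: rat where "x \<in> {of_rat a<..<of_rat b}" and "{of_rat a<..<of_rat b} \<inter> K = {}"
proof -
  obtain d where d: "d > 0" "ball x d \<subseteq> - K"
    using assms open_contains_ball by (metis ComplI open_Compl)
  obtain a where a: "x - d < of_rat a" "of_rat a < x"
    using Rats_dense_in_real[of "x - d" x] d(1) by (auto elim: Rats_cases)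
  obtain b where b: "x < of_rat b" "of_rat b < x + d"
    using Rats_dense_in_real[of x "x + d"] d(1) by (auto elim: Rats_cases)
  have "{of_rat a<..<of_rat b} \<subseteq> ball x d"
    using a b by (auto simp: dist_real_def)
  with d a b show thesis by (intro that[of a b]) auto
qed

lemma card_of_closed_real_sets_le: "|{K :: real set. closed K}| \<le>o |UNIV :: real set|"
proof -
  define enc where
    "enc K = {to_nat (a, b) | a b :: rat. {of_rat a<..<of_rat b} \<inter> K = {}}" for K :: "real set"
  have "K \<subseteq> K'" if "closed K'" and "enc K = enc K'" for K K' :: "real set"
  proof
    fix x assume "x \<in> K"
    show "x \<in> K'"
    proof (rule ccontr)
      assume "x \<notin> K'"
      then obtain a b where ab: "x \<in> {of_rat a<..<of_rat b}" "{of_rat a<..<of_rat b} \<inter> K' = {}"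
        using closed_real_avoids_rational_interval \<open>closed K'\<close> by blast
      then have "to_nat (a, b) \<in> enc K"
        using \<open>enc K = enc K'\<close> unfolding enc_def by blast
      then have "{of_rat a<..<of_rat b} \<inter> K = {}"
        unfolding enc_def by auto
      then show False using ab(1) \<open>x \<in> K\<close> by blast
    qed
  qed
  then have "inj_on enc {K. closed K}"
    by (intro inj_onI) (metis mem_Collect_eq subset_antisym)
  then have "|{K :: real set. closed K}| \<le>o |UNIV :: nat set set|"
    using card_of_ordLeq by blast
  moreover have "|UNIV :: nat set set| \<le>o |UNIV :: real set|"
    using nat_sets_eqpoll_reals eqpoll_imp_lepoll card_of_ordLeq unfolding lepoll_def by blast
  ultimately show ?thesis using ordLeq_transitive by blast
qed

text \<open>Transfinite recursion along a well-order of \<open>I\<close> of type \<open>|I|\<close>: at stage \<open>i\<close> fewer than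
  \<open>|I| \<le> |C i|\<close> points have been chosen, so a new one is left in \<open>C i\<close>.\<close>
lemma inj_on_choice_card_le:
  fixes I :: "'i set" and C :: "'i \<Rightarrow> 'a set"
  assumes I_le: "|I| \<le>o |B|" and C_ge: "\<And>i. i \<in> I \<Longrightarrow> |B| \<le>o |C i|"
  shows "\<exists>p. inj_on p I \<and> (\<forall>i\<in>I. p i \<in> C i)"
proof -
  let ?r = "|I|"
  have Co: "Card_order ?r" by (rule card_of_Card_order)
  have wo: "wo_rel ?r" using card_of_Well_order unfolding wo_rel_def by blast
  define F where "F f i = (SOME x. x \<in> C i \<and> x \<notin> f ` underS ?r i)" for f :: "'i \<Rightarrow> 'a" and i
  define p where "p = wfrec (?r - Id) F"
  have fresh: "p i \<in> C i \<and> p i \<notin> p ` underS ?r i" if "i \<in> I" for i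
  proof -
    have p_eq: "p i = F (cut p (?r - Id) i) i"
      unfolding p_def by (rule wfrec[OF wo_rel.WF[OF wo]])
    have cut_eq: "cut p (?r - Id) i ` underS ?r i = p ` underS ?r i"
      by (auto simp: cut_def underS_def image_iff)
    have "|p ` underS ?r i| \<le>o |underS ?r i|" by (rule card_of_image)
    moreover have "|underS ?r i| <o ?r" using card_of_underS[OF Co] that by (simp add: Field_card_of)
    ultimately have "|p ` underS ?r i| <o |C i|"
      using I_le C_ge[OF that] by (meson ordLeq_ordLess_trans ordLess_ordLeq_trans)
    then have "\<not> C i \<subseteq> p ` underS ?r i"
      using card_of_mono1 not_ordLess_ordLeq by metis
    then have "\<exists>x. x \<in> C i \<and> x \<notin> p ` underS ?r i"
      by blast
    then have "F (cut p (?r - Id) i) i \<in> C i \<and> F (cut p (?r - Id) i) i \<notin> p ` underS ?r i"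
      unfolding F_def cut_eq by (rule someI_ex)
    then show ?thesis using p_eq by simp
  qed
  have "inj_on p I"
  proof (rule inj_onI)
    fix i j assume ij: "i \<in> I" "j \<in> I" "p i = p j"
    have "(i, j) \<in> ?r \<or> (j, i) \<in> ?r"
      using wo_rel.TOTALS[OF wo] ij by (simp add: Field_card_of)
    then have "i = j \<or> i \<in> underS ?r j \<or> j \<in> underS ?r i"
      by (auto simp: underS_def)
    moreover have "i \<notin> underS ?r j" "j \<notin> underS ?r i"
      using fresh[OF ij(1)] fresh[OF ij(2)] ij(3) by (metis image_eqI)+
    ultimately show "i = j" by blast
  qed
  with fresh show ?thesis by blast
qed

lemma measure_Int_atMost_lipschitz:
  fixes K :: "real set"
  assumes K: "K \<in> lmeasurable"
  shows "1-lipschitz_on UNIV (\<lambda>x. measure lebesgue (K \<inter> {..x}))"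
proof -
  define F where "F x = measure lebesgue (K \<inter> {..x})" for x
  have K_atMost: "K \<inter> {..x} \<in> lmeasurable" for x
    using K by (intro fmeasurable_Int_fmeasurable) auto
  have increment: "0 \<le> F y - F x \<and> F y - F x \<le> y - x" if "x \<le> y" for x y
  proof -
    have "F y = F x + measure lebesgue (K \<inter> {..y} - K \<inter> {..x})"
      unfolding F_def using measure_Un2[OF K_atMost[of x] K_atMost[of y]] that
      by (metis Int_mono order_refl Un_absorb1 atMost_subset_iff)
    moreover have "measure lebesgue (K \<inter> {..y} - K \<inter> {..x}) \<le> measure lebesgue {x..y}"
      using K_atMost by (intro measure_mono_fmeasurable) auto
    ultimately show ?thesis using that by simp
  qed
  have "dist (F x) (F y) \<le> 1 * dist x y" for x y
    using increment[of x y] increment[of y x] by (cases "x \<le> y") (auto simp: dist_real_def)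
  then show ?thesis unfolding F_def lipschitz_on_def by simp
qed

text \<open>The distribution function \<open>x \<mapsto> measure (K \<inter> {..x})\<close> maps \<open>K\<close> onto the whole interval
  between \<open>0\<close> and \<open>measure K\<close>: the value at \<open>x\<close> is already attained at \<open>Sup (K \<inter> {..x})\<close>.\<close>
lemma card_of_real_le_compact_measure_pos:
  fixes K :: "real set"
  assumes K: "compact K" and pos: "0 < measure lebesgue K"
  shows "|UNIV :: real set| \<le>o |K|"
proof -
  define F where "F x = measure lebesgue (K \<inter> {..x})" for x
  have cont: "continuous_on UNIV F"
    unfolding F_def
    by (rule lipschitz_on_continuous_on[OF measure_Int_atMost_lipschitz[OF lmeasurable_compact[OF K]]])
  obtain B where B: "\<forall>x\<in>K. \<bar>x\<bar> \<le> B"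
    using compact_imp_bounded[OF K] bounded_real by blast
  define a b where "a = - \<bar>B\<bar> - 1" and "b = \<bar>B\<bar>"
  have "K \<inter> {..a} = {}" "K \<inter> {..b} = K"
    using B by (force simp: a_def b_def)+
  then have Fa: "F a = 0" and Fb: "F b = measure lebesgue K"
    unfolding F_def by simp_all
  have "{0<..<measure lebesgue K} \<subseteq> F ` K"
  proof
    fix y assume y: "y \<in> {0<..<measure lebesgue K}"
    obtain x where x: "F x = y"
      using IVT'[of F a y b] Fa Fb y continuous_on_subset[OF cont] by (force simp: a_def b_def)
    let ?S = "K \<inter> {..x}"
    have "?S \<noteq> {}" using x y unfolding F_def by auto
    moreover have bdd: "bdd_above ?S" by (rule bdd_aboveI[of _ x]) auto
    moreover have "closed ?S" using compact_imp_closed[OF K] by (simp add: closed_Int)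
    ultimately have k: "Sup ?S \<in> ?S" by (rule closed_contains_Sup)
    then have "K \<inter> {..Sup ?S} = ?S"
      using bdd by (auto intro: cSup_upper)
    then have "F (Sup ?S) = y" using x unfolding F_def by simp
    then show "y \<in> F ` K" using k by blast
  qed
  then have "|{0<..<measure lebesgue K}| \<le>o |K|" by (rule surj_imp_ordLeq)
  moreover have "( |UNIV :: real set|, |{0<..<measure lebesgue K}| ) \<in> ordIso"
    using open_interval_eqpoll_reals[of 0 "measure lebesgue K"] pos
      eqpoll_iff_card_of_ordIso eqpoll_sym by blast
  ultimately show ?thesis using ordIso_ordLeq_trans by blast
qed

lemma lmeasurable_inner_closed_measure_pos:
  fixes E :: "real set"
  assumes E: "E \<in> lmeasurable" and pos: "0 < measure lebesgue E"
  obtains T where "closed T" and "T \<subseteq> E" and "0 < measure lebesgue T"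
proof -
  obtain T where T: "closed T" "T \<subseteq> E" "E - T \<in> lmeasurable"
      "emeasure lebesgue (E - T) < ennreal (measure lebesgue E)"
    using sets_lebesgue_inner_closed[OF fmeasurableD[OF E] pos] by blast
  have "T \<in> lmeasurable"
    using T(1,2) by (intro fmeasurableI2[OF E]) (simp_all add: borel_closed)
  then have "measure lebesgue (E - T) = measure lebesgue E - measure lebesgue T"
    using measurable_measure_Diff[OF E _ T(2)] by (simp add: fmeasurable_def)
  moreover have "measure lebesgue (E - T) < measure lebesgue E"
    using T(3,4) by (simp add: emeasure_eq_measure2 ennreal_less_iff)
  ultimately have "0 < measure lebesgue T" by simp
  with T(1,2) show thesis by (rule that)
qed

lemma not_measurable_if_splits_closed_measure_pos:
  fixes D S :: "real set"
  assumes S: "S \<in> lmeasurable" "0 < measure lebesgue S" and D: "D \<subseteq> S"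
    and split: "\<And>K. closed K \<Longrightarrow> K \<subseteq> S \<Longrightarrow> 0 < measure lebesgue K \<Longrightarrow> K \<inter> D \<noteq> {} \<and> K - D \<noteq> {}"
  shows "D \<notin> sets lebesgue"
proof
  assume "D \<in> sets lebesgue"
  then have D_meas: "D \<in> lmeasurable" and SD_meas: "S - D \<in> lmeasurable"
    using S(1) D by (auto intro: fmeasurableI2)
  have "measure lebesgue (S - D) = measure lebesgue S - measure lebesgue D"
    using measurable_measure_Diff[OF S(1) _ D] D_meas by (simp add: fmeasurable_def)
  then consider "0 < measure lebesgue D" | "0 < measure lebesgue (S - D)"
    using S(2) measure_nonneg[of lebesgue D] by linarith
  then show False
  proof cases
    case 1
    then obtain T where "closed T" "T \<subseteq> D" "0 < measure lebesgue T"
      using lmeasurable_inner_closed_measure_pos[OF D_meas] by blast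
    then show False using split[of T] D by blast
  next
    case 2
    then obtain T where "closed T" "T \<subseteq> S - D" "0 < measure lebesgue T"
      using lmeasurable_inner_closed_measure_pos[OF SD_meas] by blast
    then show False using split[of T] by blast
  qed
qed

definition mpoly_value :: "'v mpoly_rep \<Rightarrow> ('v \<Rightarrow> real) \<Rightarrow> real" where
  "mpoly_value P y =
     (\<Sum>m\<in>Poly_Mapping.keys P. Poly_Mapping.lookup P m * (\<Prod>v\<in>Poly_Mapping.keys m. y v ^ Poly_Mapping.lookup m v))"

lemma poly_eval_eq_mpoly_value: "poly_eval P \<alpha> t = mpoly_value P (\<lambda>v. v \<alpha> t)"
  by (simp add: poly_eval_def mpoly_value_def)

lemma mpoly_value_cong:
  assumes "\<And>v. v \<in> poly_vars P \<Longrightarrow> y v = y' v"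
  shows "mpoly_value P y = mpoly_value P y'"
  unfolding mpoly_value_def
proof (intro sum.cong refl arg_cong2[where f = "(*)"] prod.cong)
  fix m v assume "m \<in> Poly_Mapping.keys P" "v \<in> Poly_Mapping.keys m"
  then have "v \<in> poly_vars P" by (auto simp: poly_vars_def)
  then show "y v ^ Poly_Mapping.lookup m v = y' v ^ Poly_Mapping.lookup m v" by (simp add: assms)
qed

lemma power_sum_nonzero_if_dominant:
  fixes c a :: "'m \<Rightarrow> real"
  assumes "finite J" and m0: "m0 \<in> J" "c m0 \<noteq> 0"
    and a_pos: "\<And>m. m \<in> J \<Longrightarrow> 0 < a m"
    and a_less: "\<And>m. m \<in> J \<Longrightarrow> m \<noteq> m0 \<Longrightarrow> a m < a m0"
  obtains s :: nat where "(\<Sum>m\<in>J. c m * a m ^ s) \<noteq> 0"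
proof -
  have a0: "0 < a m0" using a_pos m0 by blast
  define g where "g s = (\<Sum>m\<in>J. c m * (a m / a m0) ^ s)" for s :: nat
  have "g \<longlonglongrightarrow> (\<Sum>m\<in>J. c m * (if m = m0 then 1 else 0))"
    unfolding g_def
  proof (intro tendsto_sum tendsto_mult tendsto_const)
    fix m assume m: "m \<in> J"
    show "(\<lambda>s. (a m / a m0) ^ s) \<longlonglongrightarrow> (if m = m0 then 1 else 0)"
    proof (cases "m = m0")
      case False
      then have "\<bar>a m / a m0\<bar> < 1"
        using a_pos[OF m] a_less[OF m] a0 by (simp add: abs_if field_simps)
      then show ?thesis using False by (simp add: LIMSEQ_abs_realpow_zero2)
    qed (use a0 in simp)
  qed
  also have "(\<Sum>m\<in>J. c m * (if m = m0 then 1 else 0)) = c m0"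
    using \<open>finite J\<close> m0 by (simp add: if_distrib cong: if_cong)
  finally have lim: "g \<longlonglongrightarrow> c m0" .
  have "\<not> (\<forall>s. g s = 0)"
  proof
    assume "\<forall>s. g s = 0"
    then have "g \<longlonglongrightarrow> 0" by (simp add: fun_eq_iff[symmetric])
    with lim have "c m0 = 0" by (rule LIMSEQ_unique)
    with m0(2) show False ..
  qed
  then obtain s where "g s \<noteq> 0" by blast
  moreover have "g s = (\<Sum>m\<in>J. c m * a m ^ s) / a m0 ^ s"
    unfolding g_def by (simp add: sum_divide_distrib power_divide)
  ultimately show thesis using that by fastforce
qed

lemma inj_on_prime_power_monomials:
  fixes pr :: "'v \<Rightarrow> nat"
  assumes pr: "inj_on pr V" "pr ` V \<subseteq> {p. prime p}"
  shows "inj_on (\<lambda>m. \<Prod>v\<in>Poly_Mapping.keys m. pr v ^ Poly_Mapping.lookup m v) {m. Poly_Mapping.keys m \<subseteq> V}"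
proof (rule inj_onI)
  have multiplicity_eq:
    "multiplicity (pr w) (\<Prod>v\<in>Poly_Mapping.keys m. pr v ^ Poly_Mapping.lookup m v) = Poly_Mapping.lookup m w"
    if m: "Poly_Mapping.keys m \<subseteq> V" and w: "w \<in> V" for m w
  proof -
    let ?e = "\<lambda>q. Poly_Mapping.lookup m (inv_into (Poly_Mapping.keys m) pr q)"
    have inj_m: "inj_on pr (Poly_Mapping.keys m)" using pr(1) m inj_on_subset by blast
    have "(\<Prod>v\<in>Poly_Mapping.keys m. pr v ^ Poly_Mapping.lookup m v) = (\<Prod>q\<in>pr ` Poly_Mapping.keys m. q ^ ?e q)"
      using inj_m by (simp add: prod.reindex)
    moreover have "multiplicity (pr w) (\<Prod>q\<in>pr ` Poly_Mapping.keys m. q ^ ?e q)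
        = (if pr w \<in> pr ` Poly_Mapping.keys m then ?e (pr w) else 0)"
      by (rule multiplicity_prod_prime_powers) (use pr m w in auto)
    moreover have "pr w \<in> pr ` Poly_Mapping.keys m \<longleftrightarrow> w \<in> Poly_Mapping.keys m"
      using pr(1) m w by (auto simp: inj_on_def)
    ultimately show ?thesis using inj_m by (auto simp: in_keys_iff)
  qed
  fix m m' assume mm': "m \<in> {m. Poly_Mapping.keys m \<subseteq> V}" "m' \<in> {m. Poly_Mapping.keys m \<subseteq> V}"
    and eq: "(\<Prod>v\<in>Poly_Mapping.keys m. pr v ^ Poly_Mapping.lookup m v)
      = (\<Prod>v\<in>Poly_Mapping.keys m'. pr v ^ Poly_Mapping.lookup m' v)"
  show "m = m'"
  proof (rule poly_mapping_eqI)
    fix w show "Poly_Mapping.lookup m w = Poly_Mapping.lookup m' w"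
    proof (cases "w \<in> V")
      case True
      then show ?thesis using multiplicity_eq[of m w] multiplicity_eq[of m' w] mm' eq by simp
    next
      case False
      then have "w \<notin> Poly_Mapping.keys m" "w \<notin> Poly_Mapping.keys m'" using mm' by auto
      then show ?thesis by (simp add: in_keys_iff)
    qed
  qed
qed

text \<open>Substituting \<open>y\<^sub>v = p\<^sub>v ^ s\<close> for distinct primes \<open>p\<^sub>v\<close> turns the monomials into the
  \<open>s\<close>-th powers of distinct integers, and the largest of them dominates for large \<open>s\<close>.\<close>
lemma mpoly_value_nonzero:
  fixes P :: "'v mpoly_rep"
  assumes "P \<noteq> 0"
  obtains y where "mpoly_value P y \<noteq> 0"
proof -
  define V where "V = \<Union> (Poly_Mapping.keys ` Poly_Mapping.keys P)"
  have "finite V" unfolding V_def by simp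
  then have "V \<lesssim> {p :: nat. prime p}"
    by (rule finite_lepoll_infinite[OF primes_infinite])
  then obtain pr :: "'v \<Rightarrow> nat" where pr: "inj_on pr V" "pr ` V \<subseteq> {p. prime p}"
    unfolding lepoll_def by blast
  define enc where "enc m = (\<Prod>v\<in>Poly_Mapping.keys m. pr v ^ Poly_Mapping.lookup m v)"
    for m :: "'v \<Rightarrow>\<^sub>0 nat"
  have keys_V: "Poly_Mapping.keys P \<subseteq> {m. Poly_Mapping.keys m \<subseteq> V}"
    unfolding V_def by blast
  have enc_inj: "inj_on enc (Poly_Mapping.keys P)"
    unfolding enc_def using inj_on_prime_power_monomials[OF pr] keys_V by (rule inj_on_subset)
  have enc_pos: "0 < enc m" if "m \<in> Poly_Mapping.keys P" for m
  proof -
    have "prime (pr v)" if "v \<in> Poly_Mapping.keys m" for v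
      using keys_V \<open>m \<in> Poly_Mapping.keys P\<close> that pr(2) by blast
    then show ?thesis unfolding enc_def by (simp add: prod_pos prime_gt_0_nat)
  qed
  have "enc ` Poly_Mapping.keys P \<noteq> {}" using assms by simp
  then have "Max (enc ` Poly_Mapping.keys P) \<in> enc ` Poly_Mapping.keys P"
    by (intro Max_in) simp_all
  then obtain m0 where m0: "m0 \<in> Poly_Mapping.keys P" "enc m0 = Max (enc ` Poly_Mapping.keys P)"
    by (metis imageE)
  obtain s :: nat where s: "(\<Sum>m\<in>Poly_Mapping.keys P. Poly_Mapping.lookup P m * real (enc m) ^ s) \<noteq> 0"
  proof (rule power_sum_nonzero_if_dominant[OF finite_keys m0(1)])
    show "Poly_Mapping.lookup P m0 \<noteq> 0" using m0(1) by (simp add: in_keys_iff)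
    show "0 < real (enc m)" if "m \<in> Poly_Mapping.keys P" for m using enc_pos[OF that] by simp
    show "real (enc m) < real (enc m0)" if "m \<in> Poly_Mapping.keys P" "m \<noteq> m0" for m
      using that m0 enc_inj Max_ge[of "enc ` Poly_Mapping.keys P" "enc m"]
      by (metis finite_imageI finite_keys image_eqI inj_on_contraD le_neq_implies_less of_nat_less_iff)
  qed
  have "(\<Prod>v\<in>Poly_Mapping.keys m. (real (pr v) ^ s) ^ Poly_Mapping.lookup m v) = real (enc m) ^ s" for m
  proof -
    have "(\<Prod>v\<in>Poly_Mapping.keys m. (real (pr v) ^ s) ^ Poly_Mapping.lookup m v)
        = (\<Prod>v\<in>Poly_Mapping.keys m. (real (pr v) ^ Poly_Mapping.lookup m v) ^ s)"
      by (simp add: power_mult[symmetric] mult.commute)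
    then show ?thesis
      unfolding enc_def by (simp add: prod_power_distrib)
  qed
  then have "mpoly_value P (\<lambda>v. real (pr v) ^ s) \<noteq> 0"
    using s by (simp add: mpoly_value_def)
  then show thesis by (rule that)
qed

type_synonym code = "real list \<times> real list"

lemma card_of_codes_le: "|UNIV :: code set| \<le>o |UNIV :: real set|"
  using card_of_Times_le_real[OF card_of_real_lists_le card_of_real_lists_le] by simp

definition code_value :: "real set \<Rightarrow> code \<Rightarrow> real" where
  "code_value S z =
     (let k = to_nat (map (\<lambda>x. x \<in> S) (fst z)) in if k < length (snd z) then snd z ! k else 0)"

lemma code_value_Nil: "code_value S ([], []) = 0"
  by (simp add: code_value_def)

text \<open>Finitely many distinct sets are told apart by their membership patterns on finitely many
  points.\<close>
lemma code_realizes_values: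
  fixes V :: "'v set" and S :: "'v \<Rightarrow> real set" and y :: "'v \<Rightarrow> real"
  assumes "finite V" and "inj_on S V"
  obtains z where "\<And>v. v \<in> V \<Longrightarrow> code_value (S v) z = y v"
proof -
  define wit where "wit v w = (SOME x. (x \<in> S v) \<noteq> (x \<in> S w))" for v w
  have "finite ((\<lambda>(v, w). wit v w) ` (V \<times> V))"
    using \<open>finite V\<close> by simp
  then obtain xs where xs: "set xs = (\<lambda>(v, w). wit v w) ` (V \<times> V)"
    using finite_list by blast
  define k where "k v = to_nat (map (\<lambda>x. x \<in> S v) xs)" for v
  have "inj_on k V"
  proof (rule inj_onI)
    fix v w assume vw: "v \<in> V" "w \<in> V" "k v = k w"
    show "v = w"
    proof (rule ccontr)
      assume "v \<noteq> w"
      then have "\<exists>x. (x \<in> S v) \<noteq> (x \<in> S w)"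
        using \<open>inj_on S V\<close> vw by (auto simp: inj_on_def)
      then have "(wit v w \<in> S v) \<noteq> (wit v w \<in> S w)"
        unfolding wit_def by (rule someI_ex)
      moreover have "wit v w \<in> set xs" using xs vw by force
      moreover have "map (\<lambda>x. x \<in> S v) xs = map (\<lambda>x. x \<in> S w) xs"
        using vw(3) unfolding k_def by simp
      ultimately show False by auto
    qed
  qed
  define L where "L = Suc (Max (insert 0 (k ` V)))"
  define ys where "ys = map (\<lambda>j. if j \<in> k ` V then y (inv_into V k j) else 0) [0..<L]"
  have "code_value (S v) (xs, ys) = y v" if "v \<in> V" for v
  proof -
    have "k v < L" unfolding L_def using \<open>finite V\<close> that by (simp add: le_imp_less_Suc)
    have "code_value (S v) (xs, ys) = (if k v < length ys then ys ! k v else 0)"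
      by (simp add: code_value_def k_def Let_def)
    also have "\<dots> = y v"
      using \<open>k v < L\<close> that \<open>inj_on k V\<close> by (simp add: ys_def)
    finally show ?thesis .
  qed
  then show thesis by (rule that)
qed

definition positive_closed_subsets :: "real set set" where
  "positive_closed_subsets = {K. closed K \<and> K \<subseteq> {0..1} \<and> 0 < measure lebesgue K}"

locale bernstein_sequences =
  fixes r :: "'k rel" and M :: "'k \<Rightarrow> real set" and p :: "real set \<times> code \<Rightarrow> real"
  assumes null_M: "\<And>\<alpha>. M \<alpha> \<in> null_sets lebesgue"
    and cover_M: "{0..1} \<subseteq> (\<Union>\<alpha>. M \<alpha>)"
    and null_initial_Union: "\<And>\<alpha>. \<Union> (M ` underS r \<alpha>) \<in> null_sets lebesgue"
    and inj_p: "inj_on p (positive_closed_subsets \<times> UNIV)"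
    and p_in: "\<And>K z. K \<in> positive_closed_subsets \<Longrightarrow> p (K, z) \<in> K"
begin

definition stage :: "'k \<Rightarrow> real set" where
  "stage \<alpha> = \<Union> (M ` underS r \<alpha>) \<union> M \<alpha>"

definition marked :: "real set" where
  "marked = p ` (positive_closed_subsets \<times> UNIV)"

definition code_at :: "real \<Rightarrow> code" where
  "code_at t = snd (inv_into (positive_closed_subsets \<times> UNIV) p t)"

definition seq_limit :: "(code \<Rightarrow> real) \<Rightarrow> real \<Rightarrow> real" where
  "seq_limit Q t = (if t \<in> marked then Q (code_at t) else 0)"

definition seq :: "(code \<Rightarrow> real) \<Rightarrow> 'k \<Rightarrow> real \<Rightarrow> real" where
  "seq Q \<alpha> t = (if t \<in> stage \<alpha> then seq_limit Q t else 0)"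

definition generator :: "real set \<Rightarrow> 'k \<Rightarrow> real \<Rightarrow> real" where
  "generator S = seq (code_value S)"

lemma marked_point:
  assumes "K \<in> positive_closed_subsets"
  shows "p (K, z) \<in> marked" and "code_at (p (K, z)) = z"
proof -
  have Kz: "(K, z) \<in> positive_closed_subsets \<times> UNIV" using assms by simp
  then show "p (K, z) \<in> marked" unfolding marked_def by (rule imageI)
  show "code_at (p (K, z)) = z" unfolding code_at_def inv_into_f_f[OF inj_p Kz] by simp
qed

lemma marked_subset: "marked \<subseteq> {0..1}"
proof
  fix t assume "t \<in> marked"
  then obtain K z where K: "K \<in> positive_closed_subsets" and t: "t = p (K, z)"
    unfolding marked_def by blast
  then have "t \<in> K" using p_in by simp
  with K show "t \<in> {0..1}" unfolding positive_closed_subsets_def by blast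
qed

lemma null_stage: "stage \<alpha> \<in> null_sets lebesgue"
  unfolding stage_def using null_initial_Union null_M by (rule null_sets.Un)

lemma eventually_in_stage:
  assumes "t \<in> {0..1}"
  obtains \<beta> where "t \<in> stage \<beta>" and "\<And>\<alpha>. (\<beta>, \<alpha>) \<in> r \<Longrightarrow> \<alpha> \<noteq> \<beta> \<Longrightarrow> t \<in> stage \<alpha>"
proof -
  obtain \<beta> where \<beta>: "t \<in> M \<beta>" using assms cover_M by blast
  show thesis
  proof (rule that)
    show "t \<in> stage \<beta>" using \<beta> by (simp add: stage_def)
    show "t \<in> stage \<alpha>" if "(\<beta>, \<alpha>) \<in> r" "\<alpha> \<noteq> \<beta>" for \<alpha>
    proof -
      have "\<beta> \<in> underS r \<alpha>" using that by (simp add: underS_def)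
      then show ?thesis using \<beta> by (auto simp: stage_def)
    qed
  qed
qed

lemma ex_marked_point_with_code: "\<exists>\<alpha> t. t \<in> stage \<alpha> \<and> t \<in> marked \<and> code_at t = z"
proof -
  have K: "{0..1} \<in> positive_closed_subsets" by (simp add: positive_closed_subsets_def)
  then have "p ({0..1}, z) \<in> {0..1}" using p_in by blast
  then obtain \<beta> where "p ({0..1}, z) \<in> stage \<beta>" by (rule eventually_in_stage)
  with marked_point[OF K] show ?thesis by blast
qed

lemma seq_measurable: "seq Q \<alpha> \<in> borel_measurable lebesgue"
proof (rule borel_measurable_AE[of "\<lambda>t. 0"])
  show "AE t in lebesgue. 0 = seq Q \<alpha> t"
    by (rule AE_I'[OF null_stage[of \<alpha>]]) (auto simp: seq_def)
qed simp

lemma seq_converges: "kseq_converges r (\<lambda>\<alpha>. seq Q \<alpha> t) (seq_limit Q t)"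
proof (cases "t \<in> marked")
  case True
  then obtain \<beta> where "\<And>\<alpha>. (\<beta>, \<alpha>) \<in> r \<Longrightarrow> \<alpha> \<noteq> \<beta> \<Longrightarrow> t \<in> stage \<alpha>"
    using eventually_in_stage marked_subset by blast
  then show ?thesis by (auto simp: kseq_converges_def seq_def)
qed (auto simp: kseq_converges_def seq_def seq_limit_def)

text \<open>Every \<open>p (K, z)\<close> lies in \<open>K\<close>, so the support of the limit and its complement both meet every
  closed set of positive measure.\<close>
lemma seq_limit_not_measurable:
  assumes "Q ([], []) = 0" and "Q z \<noteq> 0"
  shows "seq_limit Q \<notin> borel_measurable lebesgue"
proof
  define D where "D = {t \<in> marked. Q (code_at t) \<noteq> 0}"
  assume "seq_limit Q \<in> borel_measurable lebesgue"
  then have "seq_limit Q -` (- {0}) \<inter> space lebesgue \<in> sets lebesgue"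
    by (rule measurable_sets) simp
  moreover have "seq_limit Q -` (- {0}) \<inter> space lebesgue = D"
    by (auto simp: D_def seq_limit_def split: if_splits)
  moreover have "D \<notin> sets lebesgue"
  proof (rule not_measurable_if_splits_closed_measure_pos[of "{0..1}"])
    fix K :: "real set" assume "closed K" "K \<subseteq> {0..1}" "0 < measure lebesgue K"
    then have K: "K \<in> positive_closed_subsets" by (simp add: positive_closed_subsets_def)
    have "p (K, z) \<in> K \<inter> D" and "p (K, ([], [])) \<in> K - D"
      using marked_point[OF K] p_in[OF K] assms by (simp_all add: D_def)
    then show "K \<inter> D \<noteq> {} \<and> K - D \<noteq> {}" by blast
  qed (use marked_subset in \<open>auto simp: D_def\<close>)
  ultimately show False by simp
qed

lemma seq_in_AN:
  assumes "Q ([], []) = 0" and "seq Q \<noteq> (\<lambda>\<alpha> t. 0)"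
  shows "seq Q \<in> AN r"
proof -
  obtain \<alpha> t where "seq Q \<alpha> t \<noteq> 0" using assms(2) by (auto simp: fun_eq_iff)
  then have "Q (code_at t) \<noteq> 0" by (auto simp: seq_def seq_limit_def split: if_splits)
  then have "seq_limit Q \<notin> borel_measurable lebesgue"
    using seq_limit_not_measurable assms(1) by blast
  then show ?thesis
    unfolding AN_def using seq_measurable seq_converges by blast
qed

lemma inj_generator: "inj generator"
proof (rule injI)
  fix S S' assume eq: "generator S = generator S'"
  show "S = S'"
  proof (rule ccontr)
    assume "S \<noteq> S'"
    obtain z where z: "\<And>v. v \<in> {S, S'} \<Longrightarrow> code_value (id v) z = (if v = S then 1 else 0)"
      by (rule code_realizes_values[of "{S, S'}" id "\<lambda>v. if v = S then 1 else 0"]) auto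
    obtain \<alpha> t where "t \<in> stage \<alpha>" "t \<in> marked" "code_at t = z"
      using ex_marked_point_with_code by blast
    then have "generator S \<alpha> t = 1" and "generator S' \<alpha> t = 0"
      using z \<open>S \<noteq> S'\<close> by (auto simp: generator_def seq_def seq_limit_def)
    with eq show False by simp
  qed
qed

lemma card_of_range_generator: "( |range generator|, |Pow (UNIV :: real set)| ) \<in> ordIso"
proof -
  have "bij_betw generator UNIV (range generator)"
    using inj_generator by (simp add: bij_betw_def)
  then have "(card_of (UNIV :: real set set), card_of (range generator)) \<in> ordIso"
    using card_of_ordIso by blast
  then show ?thesis using ordIso_symmetric by simp
qed

text \<open>At a marked point in a stage with a suitable code the generators take arbitrary prescribed
  values, so a polynomial relation among them would be a polynomial identity on \<open>\<real>\<^sup>n\<close>.\<close>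
lemma alg_independent_range_generator: "alg_independent (range generator)"
  unfolding alg_independent_def
proof (intro allI impI)
  fix P :: "('k \<Rightarrow> real \<Rightarrow> real) mpoly_rep"
  assume P: "P \<noteq> 0 \<and> poly_vars P \<subseteq> range generator \<and> Poly_Mapping.lookup P 0 = 0"
  from P have "P \<noteq> 0" by simp
  then obtain y where y: "mpoly_value P y \<noteq> 0"
    by (rule mpoly_value_nonzero)
  have gen_inv: "generator (inv generator v) = v" if "v \<in> poly_vars P" for v
    using that P by (meson f_inv_into_f subsetD)
  have "finite (poly_vars P)"
    by (simp add: poly_vars_def)
  moreover have "inj_on (inv generator) (poly_vars P)"
    by (rule inj_on_inverseI[where g = generator]) (rule gen_inv)
  ultimately obtain z where z: "\<And>v. v \<in> poly_vars P \<Longrightarrow> code_value (inv generator v) z = y v"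
    by (rule code_realizes_values[where y = y]) blast
  obtain \<alpha> t where t: "t \<in> stage \<alpha>" "t \<in> marked" "code_at t = z"
    using ex_marked_point_with_code by blast
  have "v \<alpha> t = y v" if v: "v \<in> poly_vars P" for v
  proof -
    have "v \<alpha> t = generator (inv generator v) \<alpha> t"
      using gen_inv[OF v] by simp
    also have "\<dots> = code_value (inv generator v) z"
      using t by (simp add: generator_def seq_def seq_limit_def)
    finally show ?thesis using z[OF v] by simp
  qed
  then have "poly_eval P \<alpha> t = mpoly_value P y"
    unfolding poly_eval_eq_mpoly_value by (rule mpoly_value_cong)
  with y show "poly_eval P \<noteq> (\<lambda>\<alpha> t. 0)"
    by auto
qed

lemma seq_combine:
  assumes "F 0 0 = 0"
  shows "(\<lambda>\<alpha> t. F (seq Q1 \<alpha> t) (seq Q2 \<alpha> t)) = seq (\<lambda>z. F (Q1 z) (Q2 z))"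
  using assms by (simp add: seq_def seq_limit_def fun_eq_iff)

lemma gen_alg_range_generator:
  "f \<in> gen_alg (range generator) \<Longrightarrow> \<exists>Q. Q ([], []) = 0 \<and> f = seq Q"
proof (induction rule: gen_alg.induct)
  case (gen x)
  then obtain S where "x = generator S" by blast
  then show ?case
    unfolding generator_def by (intro exI[of _ "code_value S"]) (simp add: code_value_Nil)
next
  case (add f g)
  then obtain Q1 Q2 where "Q1 ([], []) = 0" "f = seq Q1" "Q2 ([], []) = 0" "g = seq Q2" by blast
  then show ?case using seq_combine[of "(+)" Q1 Q2] by (intro exI[of _ "\<lambda>z. Q1 z + Q2 z"]) simp
next
  case (mult f g)
  then obtain Q1 Q2 where "Q1 ([], []) = 0" "f = seq Q1" "Q2 ([], []) = 0" "g = seq Q2" by blast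
  then show ?case using seq_combine[of "(*)" Q1 Q2] by (intro exI[of _ "\<lambda>z. Q1 z * Q2 z"]) simp
next
  case (scale f c)
  then obtain Q where "Q ([], []) = 0" "f = seq Q" by blast
  then show ?case using seq_combine[of "\<lambda>a _. c * a" Q Q] by (intro exI[of _ "\<lambda>z. c * Q z"]) simp
qed

theorem strongly_algebrable_AN: "strongly_algebrable (AN r) (card_of (Pow (UNIV :: real set)))"
  unfolding strongly_algebrable_def
proof (intro exI[of _ "range generator"] conjI ballI impI)
  fix f assume "f \<in> gen_alg (range generator)" and "f \<noteq> (\<lambda>\<alpha> t. 0)"
  then show "f \<in> AN r" using gen_alg_range_generator seq_in_AN by blast
qed (fact card_of_range_generator alg_independent_range_generator)+

end

text \<open>Index a cover of \<open>[0,1]\<close> of size \<open>cov(N) = add(N)\<close> by the field of \<open>r\<close>; a proper initial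
  segment of \<open>r\<close> has fewer than \<open>add(N)\<close> members, so its union is null.\<close>
lemma null_cover_of_addN_eq_covN:
  fixes r :: "'k rel"
  assumes add: "is_addN r" and cov: "is_covN r"
  obtains M :: "'k \<Rightarrow> real set"
  where "\<And>\<alpha>. M \<alpha> \<in> null_sets lebesgue" and "{0..1} \<subseteq> (\<Union>\<alpha>. M \<alpha>)"
    and "\<And>\<alpha>. \<Union> (M ` underS r \<alpha>) \<in> null_sets lebesgue"
proof -
  have Co: "Card_order r" and Fr: "Field r = UNIV"
    using add card_order_on_Card_order unfolding is_addN_def by blast+
  obtain F :: "real set set" where F: "F \<subseteq> null_sets lebesgue" "{0..1} \<subseteq> \<Union>F" "( |F|, r) \<in> ordIso"
    using cov unfolding is_covN_def by blast
  have "( |UNIV :: 'k set|, |F| ) \<in> ordIso"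
    using card_of_Field_ordIso[OF Co] Fr F(3) ordIso_symmetric ordIso_transitive by fastforce
  then obtain M where M: "bij_betw M (UNIV :: 'k set) F"
    using card_of_ordIso by blast
  then have null_M: "M \<alpha> \<in> null_sets lebesgue" for \<alpha>
    using F(1) bij_betwE by blast
  have "\<Union> (M ` underS r \<alpha>) \<in> null_sets lebesgue" for \<alpha>
  proof (rule ccontr)
    assume "\<Union> (M ` underS r \<alpha>) \<notin> null_sets lebesgue"
    then have "r \<le>o |M ` underS r \<alpha>|"
      using add null_M unfolding is_addN_def by blast
    moreover have "|M ` underS r \<alpha>| \<le>o |underS r \<alpha>|" by (rule card_of_image)
    moreover have "|underS r \<alpha>| <o r" using card_of_underS[OF Co] Fr by simp
    ultimately show False
      by (meson not_ordLess_ordLeq ordLeq_transitive)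
  qed
  moreover have "{0..1} \<subseteq> (\<Union>\<alpha>. M \<alpha>)"
    using F(2) M by (simp add: bij_betw_def)
  ultimately show thesis using null_M that by blast
qed

lemma ex_points_in_positive_closed_subsets:
  obtains p :: "real set \<times> code \<Rightarrow> real"
  where "inj_on p (positive_closed_subsets \<times> UNIV)"
    and "\<And>K z. K \<in> positive_closed_subsets \<Longrightarrow> p (K, z) \<in> K"
proof -
  have "positive_closed_subsets \<subseteq> {K. closed K}"
    by (auto simp: positive_closed_subsets_def)
  then have "|positive_closed_subsets| \<le>o |{K :: real set. closed K}|"
    by (rule card_of_mono1)
  then have "|positive_closed_subsets| \<le>o |UNIV :: real set|"
    using card_of_closed_real_sets_le by (rule ordLeq_transitive)
  then have size: "|positive_closed_subsets \<times> (UNIV :: code set)| \<le>o |UNIV :: real set|"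
    using card_of_codes_le by (rule card_of_Times_le_real)
  have large: "|UNIV :: real set| \<le>o |fst i|" if "i \<in> positive_closed_subsets \<times> (UNIV :: code set)" for i
  proof (rule card_of_real_le_compact_measure_pos)
    have "closed (fst i)" "fst i \<subseteq> {0..1}"
      using that by (auto simp: positive_closed_subsets_def)
    then show "compact (fst i)"
      using bounded_subset[OF compact_imp_bounded[OF compact_Icc[of 0 1]]] compact_eq_bounded_closed
      by blast
    show "0 < measure lebesgue (fst i)"
      using that by (auto simp: positive_closed_subsets_def)
  qed
  have "\<exists>p :: real set \<times> code \<Rightarrow> real. inj_on p (positive_closed_subsets \<times> UNIV)
      \<and> (\<forall>i \<in> positive_closed_subsets \<times> UNIV. p i \<in> fst i)"
    using size large by (rule inj_on_choice_card_le)
  then obtain p :: "real set \<times> code \<Rightarrow> real"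
    where "inj_on p (positive_closed_subsets \<times> UNIV)"
      and "\<forall>i \<in> positive_closed_subsets \<times> UNIV. p i \<in> fst i"
    by blast
  then show thesis
    by (intro that) auto
qed

theorem mainTheorem18:
  fixes r :: "'k rel"
  assumes "is_addN r" and "is_covN r"
  shows "strongly_algebrable (AN r) (card_of (Pow (UNIV :: real set)))"
proof -
  obtain M :: "'k \<Rightarrow> real set" where
      "\<And>\<alpha>. M \<alpha> \<in> null_sets lebesgue" "{0..1} \<subseteq> (\<Union>\<alpha>. M \<alpha>)"
      "\<And>\<alpha>. \<Union> (M ` underS r \<alpha>) \<in> null_sets lebesgue"
    using null_cover_of_addN_eq_covN[OF assms] by blast
  moreover obtain p :: "real set \<times> code \<Rightarrow> real" where
      "inj_on p (positive_closed_subsets \<times> UNIV)"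
      "\<And>K z. K \<in> positive_closed_subsets \<Longrightarrow> p (K, z) \<in> K"
    using ex_points_in_positive_closed_subsets by blast
  ultimately interpret bernstein_sequences r M p
    by unfold_locales
  show ?thesis by (rule strongly_algebrable_AN)
qed

end
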